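(* For $\alpha>0$ let $\mu_\alpha(x)=z_\alpha^{-1}(1+|x|^2)^{-(d+\alpha)/2}$ denote the generalized Cauchy density on $\mathbb R^d$. Let $\alpha_1,\alpha_2>0$ and $\alpha_{\min}=\min(\alpha_1,\alpha_2)$. Then there exist constants $0<c\le C<\infty$ such that for all $x\in\mathbb R^d$, $c\,\mu_{\alpha_{\min}}(x)\le(\mu_{\alpha_1}*\mu_{\alpha_2})(x)\le C\,\mu_{\alpha_{\min}}(x)$. Consequently, if $\mu_{\alpha_{\min}}$ satisfies a weighted Poincaré inequality with weight $\omega$ (e.g. $\omega(x)=\sqrt{1+|x|^2}$), then so does $\mu_{\alpha_1}*\mu_{\alpha_2}$, with constant at most $\frac Cc\,C_{P,\omega}(\mu_{\alpha_{\min}})$.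
   Context: $z_\alpha$ is the normalizing constant. A probability measure $\mu$ satisfies a weighted Poincaré inequality with weight $\omega\ge0$ and constant $C_{P,\omega}(\mu)$ if for all smooth $f$, $\mathrm{Var}_\mu(f)\le C_{P,\omega}(\mu)\int|\nabla f|^2\omega^2d\mu$. *)

theory Defs
  imports "HOL-Analysis.Analysis"
begin

definition cauchy_kernel :: "real \<Rightarrow> 'a::euclidean_space \<Rightarrow> real" where
  "cauchy_kernel \<alpha> x = (1 + (norm x)\<^sup>2) powr (- (real DIM('a) + \<alpha>) / 2)"

definition cauchy_const :: "real \<Rightarrow> 'a::euclidean_space itself \<Rightarrow> real" where
  "cauchy_const \<alpha> _ = (\<integral>x. cauchy_kernel \<alpha> (x::'a) \<partial>lborel)"

definition cauchy_density :: "real \<Rightarrow> 'a::euclidean_space \<Rightarrow> real" where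
  "cauchy_density \<alpha> x = cauchy_kernel \<alpha> x / cauchy_const \<alpha> TYPE('a)"

definition convolution :: "('a::euclidean_space \<Rightarrow> real) \<Rightarrow> ('a \<Rightarrow> real) \<Rightarrow> 'a \<Rightarrow> real" where
  "convolution f g x = (\<integral>y. f (x - y) * g y \<partial>lborel)"

text \<open>Smooth (C^infinity) real functions: differentiable everywhere, and every
  directional derivative is again smooth.\<close>
coinductive smooth_fun :: "('a::euclidean_space \<Rightarrow> real) \<Rightarrow> bool" where
  "(\<forall>x. f differentiable (at x)) \<Longrightarrow>
   (\<forall>v. smooth_fun (\<lambda>x. frechet_derivative f (at x) v)) \<Longrightarrow> smooth_fun f"

definition grad :: "('a::euclidean_space \<Rightarrow> real) \<Rightarrow> 'a \<Rightarrow> 'a" where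
  "grad f x = (\<Sum>b\<in>Basis. frechet_derivative f (at x) b *\<^sub>R b)"

definition variance_ext :: "'a measure \<Rightarrow> ('a \<Rightarrow> real) \<Rightarrow> ennreal" where
  "variance_ext M f =
     (if integrable M f then (\<integral>\<^sup>+x. ennreal ((f x - (\<integral>y. f y \<partial>M))\<^sup>2) \<partial>M) else \<infinity>)"

definition weighted_poincare ::
  "('a::euclidean_space \<Rightarrow> real) \<Rightarrow> ('a \<Rightarrow> real) \<Rightarrow> real \<Rightarrow> bool" where
  "weighted_poincare p w K \<longleftrightarrow>
     (\<forall>x. 0 \<le> w x) \<and>
     (\<forall>f. smooth_fun f \<longrightarrow>
        variance_ext (density lborel (\<lambda>x. ennreal (p x))) f
          \<le> ennreal K * (\<integral>\<^sup>+x. ennreal ((norm (grad f x))\<^sup>2 * (w x)\<^sup>2)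
                              \<partial>density lborel (\<lambda>x. ennreal (p x))))"

end

theory Submission
  imports Defs
begin

(*
  Write k_a(x) = (1 + |x|^2) powr (-(d + a)/2) and e_a = (d + a)/2.  Peetre's inequality
  1 + |x - y|^2 <= 2 (1 + |x|^2) (1 + |y|^2) gives k_a(x - y) >= 2^(-e_a) k_a(x) k_a(y), hence
  (k_a conv k_b)(x) >= 2^(-e_a) k_a(x) \<integral> k_a k_b; since convolution is commutative, the same
  holds with a and b exchanged, and this gives the lower bound by the kernel of the smaller
  exponent.  For the upper bound, every y satisfies |x| <= 2 |x - y| or |x| <= 2 |y|; on the first
  region k_a(x - y) <= 4^e_a k_a(x), on the second k_b(y) <= 4^e_b k_b(x), and integrating gives
  (k_a conv k_b)(x) <= (4^e_a z_b + 4^e_b z_a) k_min(a,b)(x).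

  Densities with c q <= p <= C q define measures with c Q <= P <= C Q.  The mean minimises the
  mean square deviation, so with m_Q the Q-mean of f, Var_P f <= \<integral> (f - m_Q)^2 dP <= C Var_Q f,
  while the weighted energy satisfies c E_Q(f) <= E_P(f).  Hence
  Var_P f <= C K E_Q(f) <= (C/c) K E_P(f).
*)

section \<open>Lebesgue integrals and convolution on Euclidean space\<close>

lemma integral_pos:
  fixes f :: "'a \<Rightarrow> real"
  assumes f: "integrable M f" and pos: "\<And>x. x \<in> space M \<Longrightarrow> 0 < f x"
    and M: "emeasure M (space M) \<noteq> 0"
  shows "0 < integral\<^sup>L M f"
proof -
  have nonneg: "0 \<le> integral\<^sup>L M f"
    using pos by (intro integral_nonneg_AE) (auto intro: less_imp_le)
  have "integral\<^sup>L M f \<noteq> 0"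
  proof
    assume "integral\<^sup>L M f = 0"
    then have "AE x in M. f x = 0"
      using f pos by (subst (asm) integral_nonneg_eq_0_iff_AE) (auto intro: less_imp_le)
    then have "AE x in M. False"
      using AE_space by eventually_elim (use pos in force)
    then obtain N where "space M \<subseteq> N" "N \<in> sets M" "emeasure M N = 0"
      by (auto elim: AE_E)
    then show False
      using M emeasure_mono[of "space M" N M] by simp
  qed
  with nonneg show ?thesis by simp
qed

lemma lborel_distr_reflect: "distr lborel borel (\<lambda>y. x - y) = (lborel :: 'a::euclidean_space measure)"
  using lborel_affine[of "-1" x] by (simp add: density_1)

lemma
  fixes f :: "'a::euclidean_space \<Rightarrow> 'b::{banach, second_countable_topology}"
  assumes [measurable]: "f \<in> borel_measurable borel"
  shows integrable_lborel_reflect: "integrable lborel (\<lambda>y. f (x - y)) \<longleftrightarrow> integrable lborel f"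
    and integral_lborel_reflect: "(\<integral>y. f (x - y) \<partial>lborel) = (\<integral>y. f y \<partial>lborel)"
proof -
  show "integrable lborel (\<lambda>y. f (x - y)) \<longleftrightarrow> integrable lborel f"
    by (subst (2) lborel_distr_reflect[symmetric, of x]) (simp add: integrable_distr_eq)
  show "(\<integral>y. f (x - y) \<partial>lborel) = (\<integral>y. f y \<partial>lborel)"
    by (subst (2) lborel_distr_reflect[symmetric, of x]) (simp add: integral_distr)
qed

lemma convolution_commute:
  fixes f g :: "'a::euclidean_space \<Rightarrow> real"
  assumes [measurable]: "f \<in> borel_measurable borel" "g \<in> borel_measurable borel"
  shows "convolution f g = convolution g f"
proof
  fix x
  show "convolution f g x = convolution g f x"
    using integral_lborel_reflect[of "\<lambda>y. f (x - y) * g y" x]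
    by (simp add: convolution_def mult.commute)
qed

lemma borel_measurable_convolution [measurable]:
  fixes f g :: "'a::euclidean_space \<Rightarrow> real"
  assumes [measurable]: "f \<in> borel_measurable borel" "g \<in> borel_measurable borel"
  shows "convolution f g \<in> borel_measurable borel"
proof -
  have "(\<lambda>x. \<integral>y. f (x - y) * g y \<partial>lborel) \<in> borel_measurable lborel"
    by (rule lborel.borel_measurable_lebesgue_integral) measurable
  then show ?thesis
    by (simp add: convolution_def[abs_def])
qed

lemma nn_integral_convolution:
  fixes f g :: "'a::euclidean_space \<Rightarrow> real"
  assumes [measurable]: "f \<in> borel_measurable borel" "g \<in> borel_measurable borel"
    and nonneg: "\<And>x. 0 \<le> f x" "\<And>x. 0 \<le> g x"
    and integrable: "\<And>x. integrable lborel (\<lambda>y. f (x - y) * g y)"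
  shows "(\<integral>\<^sup>+x. convolution f g x \<partial>lborel) = (\<integral>\<^sup>+x. f x \<partial>lborel) * (\<integral>\<^sup>+y. g y \<partial>lborel)"
proof -
  have translate: "(\<integral>\<^sup>+x. f (x - y) \<partial>lborel) = (\<integral>\<^sup>+x. f x \<partial>lborel)" for y
    using nn_integral_distr[of "(+) (- y)" lborel borel "\<lambda>x. ennreal (f x)"]
    by (simp add: lborel_distr_plus)
  have "(\<integral>\<^sup>+x. convolution f g x \<partial>lborel) = (\<integral>\<^sup>+x. \<integral>\<^sup>+y. f (x - y) * g y \<partial>lborel \<partial>lborel)"
    unfolding convolution_def
    by (intro nn_integral_cong nn_integral_eq_integral[symmetric] integrable) (simp add: nonneg)
  also have "\<dots> = (\<integral>\<^sup>+y. \<integral>\<^sup>+x. ennreal (f (x - y)) * g y \<partial>lborel \<partial>lborel)"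
    by (subst lborel_pair.Fubini') (auto intro!: nn_integral_cong simp: ennreal_mult' nonneg)
  also have "\<dots> = (\<integral>\<^sup>+y. (\<integral>\<^sup>+x. f (x - y) \<partial>lborel) * g y \<partial>lborel)"
    by (simp add: nn_integral_multc)
  also have "\<dots> = (\<integral>\<^sup>+y. (\<integral>\<^sup>+x. f x \<partial>lborel) * g y \<partial>lborel)"
    using translate by simp
  also have "\<dots> = (\<integral>\<^sup>+x. f x \<partial>lborel) * (\<integral>\<^sup>+y. g y \<partial>lborel)"
    by (simp add: nn_integral_cmult)
  finally show ?thesis .
qed

section \<open>Comparable measures and weighted Poincare inequalities\<close>

(* Stated for arbitrary f, so that no measurability of the energy integrand is needed. *)
lemma nn_integral_mono_scaled:
  assumes sets: "sets M = sets N"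
    and le: "\<And>A. A \<in> sets M \<Longrightarrow> c * emeasure M A \<le> d * emeasure N A"
  shows "c * nn_integral M f \<le> d * nn_integral N f"
proof -
  have space: "space M = space N"
    using sets by (rule sets_eq_imp_space_eq)
  have simple: "simple_function M g \<longleftrightarrow> simple_function N g" for g
    using simple_function_cong_algebra[OF sets space] by metis
  have "c * integral\<^sup>S M g \<le> d * integral\<^sup>S N g" if "simple_function M g" for g
    unfolding simple_integral_def space sum_distrib_left
  proof (rule sum_mono)
    fix y assume "y \<in> g ` space N"
    have "g -` {y} \<inter> space N \<in> sets M"
      using simple_functionD(2)[OF that, of "{y}"] space by simp
    then have "y * (c * emeasure M (g -` {y} \<inter> space N)) \<le> y * (d * emeasure N (g -` {y} \<inter> space N))"
      by (intro mult_left_mono le) auto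
    then show "c * (y * emeasure M (g -` {y} \<inter> space N)) \<le> d * (y * emeasure N (g -` {y} \<inter> space N))"
      by (simp add: mult.left_commute)
  qed
  then have "(SUP g\<in>{g. simple_function M g \<and> g \<le> f}. c * integral\<^sup>S M g)
      \<le> (SUP g\<in>{g. simple_function N g \<and> g \<le> f}. d * integral\<^sup>S N g)"
    by (intro SUP_mono) (auto simp: simple)
  then show ?thesis
    unfolding nn_integral_def by (simp add: SUP_mult_left_ennreal)
qed

lemma nn_integral_density_mono_scaled:
  fixes p q :: "'a \<Rightarrow> real"
  assumes [measurable]: "p \<in> borel_measurable M" "q \<in> borel_measurable M"
    and "0 \<le> c" "0 \<le> d" and le: "\<And>x. x \<in> space M \<Longrightarrow> c * q x \<le> d * p x"
  shows "ennreal c * nn_integral (density M q) g \<le> ennreal d * nn_integral (density M p) g"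
proof (rule nn_integral_mono_scaled)
  fix A assume "A \<in> sets (density M q)"
  then have [measurable]: "A \<in> sets M" by simp
  have "ennreal c * ennreal (q x) \<le> ennreal d * ennreal (p x)" if "x \<in> space M" for x
    using le[OF that] \<open>0 \<le> c\<close> \<open>0 \<le> d\<close> by (simp add: ennreal_mult'[symmetric] ennreal_leI)
  then have "(\<integral>\<^sup>+x. ennreal c * (ennreal (q x) * indicator A x) \<partial>M) \<le> (\<integral>\<^sup>+x. ennreal d * (ennreal (p x) * indicator A x) \<partial>M)"
    by (intro nn_integral_mono) (auto simp: indicator_def)
  then show "ennreal c * emeasure (density M q) A \<le> ennreal d * emeasure (density M p) A"
    by (simp add: emeasure_density nn_integral_cmult)
qed simp

lemma integrable_mono_scaled:
  fixes f :: "'a \<Rightarrow> real"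
  assumes sets: "sets M = sets N" and "0 < c"
    and le: "\<And>g. ennreal c * nn_integral M g \<le> ennreal d * nn_integral N g"
    and f: "integrable N f"
  shows "integrable M f"
proof -
  have "(\<integral>\<^sup>+x. norm (f x) \<partial>N) < \<infinity>"
    using f by (simp add: integrable_iff_bounded)
  then have "ennreal d * (\<integral>\<^sup>+x. norm (f x) \<partial>N) < \<infinity>"
    by (simp add: ennreal_mult_less_top)
  then have "ennreal c * (\<integral>\<^sup>+x. norm (f x) \<partial>M) < \<infinity>"
    using le[of "\<lambda>x. norm (f x)"] by (meson le_less_trans)
  then have "(\<integral>\<^sup>+x. norm (f x) \<partial>M) < \<infinity>"
    using \<open>0 < c\<close> by (auto simp: ennreal_mult_less_top)
  moreover have "f \<in> borel_measurable M"
    using f measurable_cong_sets[OF sets refl] by auto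
  ultimately show ?thesis
    by (simp add: integrable_iff_bounded)
qed

lemma nn_integral_square_deviation_mean_le:
  fixes f :: "'a \<Rightarrow> real"
  assumes M: "emeasure M (space M) = 1" and f: "integrable M f"
  shows "(\<integral>\<^sup>+x. (f x - (\<integral>y. f y \<partial>M))\<^sup>2 \<partial>M) \<le> (\<integral>\<^sup>+x. (f x - a)\<^sup>2 \<partial>M)"
proof (cases "(\<integral>\<^sup>+x. (f x - a)\<^sup>2 \<partial>M) = \<infinity>")
  case False
  interpret finite_measure M
    using M by (intro finite_measureI) simp
  have unit: "measure M (space M) = 1"
    using M by (simp add: measure_def)
  define m where "m = (\<integral>y. f y \<partial>M)"
  have fa: "integrable M (\<lambda>x. (f x - a)\<^sup>2)"
    using f False by (intro integrableI_nonneg) (auto simp: top.not_eq_extremum)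
  have shift: "(f x - m)\<^sup>2 = (f x - a)\<^sup>2 + (2 * (a - m) * (f x - a) + (a - m)\<^sup>2)" for x
    by (simp add: power2_eq_square algebra_simps)
  have fm: "integrable M (\<lambda>x. (f x - m)\<^sup>2)"
    unfolding shift using fa f by auto
  have "(\<integral>x. f x - a \<partial>M) = m - a"
    using f unit by (simp add: m_def)
  then have "(\<integral>x. (f x - m)\<^sup>2 \<partial>M) = (\<integral>x. (f x - a)\<^sup>2 \<partial>M) + (2 * (a - m) * (m - a) + (a - m)\<^sup>2)"
    unfolding shift using fa f unit by simp
  also have "\<dots> = (\<integral>x. (f x - a)\<^sup>2 \<partial>M) - (a - m)\<^sup>2"
    by (simp add: power2_eq_square algebra_simps)
  also have "\<dots> \<le> (\<integral>x. (f x - a)\<^sup>2 \<partial>M)"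
    by simp
  finally show ?thesis
    using fa fm by (simp add: nn_integral_eq_integral ennreal_leI m_def)
qed simp

lemma variance_ext_mono_scaled:
  fixes f :: "'a \<Rightarrow> real"
  assumes sets: "sets P = sets Q" and P: "emeasure P (space P) = 1" and "0 < c" "0 < C"
    and lower: "\<And>g. ennreal c * nn_integral Q g \<le> nn_integral P g"
    and upper: "\<And>g. nn_integral P g \<le> ennreal C * nn_integral Q g"
  shows "variance_ext P f \<le> ennreal C * variance_ext Q f"
proof (cases "integrable P f")
  case True
  have "integrable Q f"
    using sets[symmetric] \<open>0 < c\<close> _ True by (rule integrable_mono_scaled[where d=1]) (use lower in simp)
  then have "variance_ext P f \<le> (\<integral>\<^sup>+x. (f x - (\<integral>y. f y \<partial>Q))\<^sup>2 \<partial>P)"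
    using nn_integral_square_deviation_mean_le[OF P True] True
    by (simp add: variance_ext_def)
  also have "\<dots> \<le> ennreal C * variance_ext Q f"
    using upper \<open>integrable Q f\<close> by (simp add: variance_ext_def)
  finally show ?thesis .
next
  case False
  then have "\<not> integrable Q f"
    using integrable_mono_scaled[OF sets, of 1 C] upper by auto
  then show ?thesis
    using \<open>0 < C\<close> by (simp add: variance_ext_def ennreal_mult_top)
qed

lemma ennreal_mult_le_rescaled:
  assumes "0 < c" "0 \<le> C" and le: "ennreal c * x \<le> y"
  shows "ennreal C * (ennreal K * x) \<le> ennreal (C / c * K) * y"
proof (cases "0 \<le> K")
  case True
  have "ennreal C * ennreal K = ennreal (C / c * K) * ennreal c"
    using assms True by (simp add: ennreal_mult[symmetric])
  then have "ennreal C * (ennreal K * x) = ennreal (C / c * K) * (ennreal c * x)"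
    by (metis mult.assoc)
  also have "\<dots> \<le> ennreal (C / c * K) * y"
    using le by (rule mult_left_mono) simp
  finally show ?thesis .
qed (simp add: ennreal_neg)

lemma weighted_poincare_density_comparison:
  fixes p q :: "'a::euclidean_space \<Rightarrow> real"
  assumes [measurable]: "p \<in> borel_measurable borel" "q \<in> borel_measurable borel"
    and "0 < c" "c \<le> C" and lower: "\<And>x. c * q x \<le> p x" and upper: "\<And>x. p x \<le> C * q x"
    and p: "(\<integral>\<^sup>+x. p x \<partial>lborel) = 1"
    and q: "weighted_poincare q w K"
  shows "weighted_poincare p w (C / c * K)"
proof -
  define P where "P = density lborel (\<lambda>x. ennreal (p x))"
  define Q where "Q = density lborel (\<lambda>x. ennreal (q x))"
  have "0 < C"
    using \<open>0 < c\<close> \<open>c \<le> C\<close> by linarith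
  have PQ_lower: "ennreal c * nn_integral Q g \<le> nn_integral P g" for g
    using nn_integral_density_mono_scaled[of p lborel q c 1 g] lower \<open>0 < c\<close>
    by (simp add: P_def Q_def)
  have PQ_upper: "nn_integral P g \<le> ennreal C * nn_integral Q g" for g
    using nn_integral_density_mono_scaled[of q lborel p 1 C g] upper \<open>0 < C\<close>
    by (simp add: P_def Q_def)
  have P: "emeasure P (space P) = 1"
    using p by (simp add: P_def emeasure_density)
  have "variance_ext P f \<le> ennreal (C / c * K) * (\<integral>\<^sup>+x. (norm (grad f x))\<^sup>2 * (w x)\<^sup>2 \<partial>P)"
    if "smooth_fun f" for f
  proof -
    define E where "E = (\<lambda>M. \<integral>\<^sup>+x. (norm (grad f x))\<^sup>2 * (w x)\<^sup>2 \<partial>M)"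
    have "variance_ext P f \<le> ennreal C * variance_ext Q f"
      by (rule variance_ext_mono_scaled[OF _ P \<open>0 < c\<close> \<open>0 < C\<close> PQ_lower PQ_upper])
         (simp add: P_def Q_def)
    also have "\<dots> \<le> ennreal C * (ennreal K * E Q)"
      using q that by (intro mult_left_mono) (auto simp: weighted_poincare_def Q_def E_def)
    also have "\<dots> \<le> ennreal (C / c * K) * E P"
      using \<open>0 < c\<close> \<open>0 < C\<close> PQ_lower unfolding E_def by (intro ennreal_mult_le_rescaled) auto
    finally show ?thesis
      by (simp add: E_def)
  qed
  then show ?thesis
    using q by (simp add: weighted_poincare_def P_def)
qed

section \<open>The Cauchy kernel\<close>

lemma nn_integral_one_plus_square_powr_finite:
  fixes s :: real
  assumes s: "1/2 < s"
  shows "(\<integral>\<^sup>+t. (1 + t\<^sup>2) powr (-s) \<partial>lborel) < \<infinity>"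
proof -
  define h :: "real \<Rightarrow> real" where "h t = (if 1 \<le> t then t powr (-2 * s) else 0)" for t
  have [measurable]: "h \<in> borel_measurable borel"
    unfolding h_def by measurable
  have "((\<lambda>t. t powr (-2 * s)) has_integral -(1 powr (-2 * s + 1)) / (-2 * s + 1)) {1..}"
    using s by (intro has_integral_powr_to_inf) auto
  then have "(h has_integral -(1 powr (-2 * s + 1)) / (-2 * s + 1)) UNIV"
    using has_integral_restrict_UNIV[of "{1..}" "\<lambda>t. t powr (-2 * s)"] by (simp add: h_def[abs_def])
  then have h: "(\<integral>\<^sup>+t. h t \<partial>lborel) < \<infinity>"
    by (subst nn_integral_has_integral_lborel) (auto simp: h_def)
  have h_reflect: "(\<integral>\<^sup>+t. h (-t) \<partial>lborel) = (\<integral>\<^sup>+t. h t \<partial>lborel)"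
    using nn_integral_real_affine[of "\<lambda>t. ennreal (h t)" "-1" 0] by simp
  have bound: "(1 + t\<^sup>2) powr (-s) \<le> indicator {-1..1} t + h t + h (-t)" for t
  proof (cases "\<bar>t\<bar> \<le> 1")
    case True
    then show ?thesis
      using powr_mono2'[of "-s" 1 "1 + t\<^sup>2"] s by (auto simp: h_def)
  next
    case False
    have "(1 + t\<^sup>2) powr (-s) \<le> (\<bar>t\<bar> powr 2) powr (-s)"
      using s False by (intro powr_mono2') (auto simp: powr_realpow)
    also have "\<dots> = \<bar>t\<bar> powr (-2 * s)"
      unfolding powr_powr by simp
    also have "\<dots> = h t + h (-t)"
      using False by (auto simp: h_def)
    finally show ?thesis
      using False by (simp add: indicator_def)
  qed
  have "(\<integral>\<^sup>+t. (1 + t\<^sup>2) powr (-s) \<partial>lborel)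
      \<le> (\<integral>\<^sup>+t. ennreal (indicator {-1..1} t) + h t + h (-t) \<partial>lborel)"
    using bound by (intro nn_integral_mono) (simp add: ennreal_plus[symmetric] h_def del: ennreal_plus)
  also have "\<dots> = emeasure lborel {-1..1::real} + (\<integral>\<^sup>+t. h t \<partial>lborel) + (\<integral>\<^sup>+t. h (-t) \<partial>lborel)"
    by (simp add: nn_integral_add ennreal_indicator)
  also have "\<dots> < \<infinity>"
    using h h_reflect by simp
  finally show ?thesis .
qed

lemma borel_measurable_cauchy_kernel [measurable]: "cauchy_kernel a \<in> borel_measurable borel"
  unfolding cauchy_kernel_def[abs_def] by measurable

lemma cauchy_kernel_pos: "0 < cauchy_kernel a x"
proof -
  have "0 < 1 + (norm x)\<^sup>2"
    by (simp add: add_pos_nonneg)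
  then show ?thesis
    by (simp add: cauchy_kernel_def)
qed

lemma cauchy_kernel_le_1:
  assumes "0 \<le> a"
  shows "cauchy_kernel a (x::'a::euclidean_space) \<le> 1"
  unfolding cauchy_kernel_def
  using powr_mono2'[of "- (real DIM('a) + a) / 2" 1 "1 + (norm x)\<^sup>2"] assms by simp

lemma cauchy_kernel_antimono:
  assumes "a \<le> b"
  shows "cauchy_kernel b x \<le> cauchy_kernel a x"
  unfolding cauchy_kernel_def using assms by (intro powr_mono) (auto simp: divide_right_mono)

lemma cauchy_kernel_le_prod:
  fixes x :: "'a::euclidean_space"
  assumes "0 \<le> a"
  defines "s \<equiv> (real DIM('a) + a) / (2 * real DIM('a))"
  shows "cauchy_kernel a x \<le> (\<Prod>b\<in>Basis. (1 + (x \<bullet> b)\<^sup>2) powr (-s))"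
proof -
  have "0 \<le> s"
    using assms by (simp add: s_def)
  have "(\<Prod>b\<in>Basis. 1 + (x \<bullet> b)\<^sup>2) \<le> (\<Prod>b\<in>(Basis::'a set). 1 + (norm x)\<^sup>2)"
  proof (rule prod_mono)
    fix b :: 'a assume "b \<in> Basis"
    then have "\<bar>x \<bullet> b\<bar>\<^sup>2 \<le> (norm x)\<^sup>2"
      by (intro power_mono Basis_le_norm) auto
    then show "0 \<le> 1 + (x \<bullet> b)\<^sup>2 \<and> 1 + (x \<bullet> b)\<^sup>2 \<le> 1 + (norm x)\<^sup>2"
      by simp
  qed
  moreover have "0 < (\<Prod>b\<in>(Basis::'a set). 1 + (x \<bullet> b)\<^sup>2)"
    by (intro prod_pos) (auto intro: add_pos_nonneg)
  ultimately have "((1 + (norm x)\<^sup>2) ^ DIM('a)) powr (-s) \<le> (\<Prod>b\<in>Basis. 1 + (x \<bullet> b)\<^sup>2) powr (-s)"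
    using \<open>0 \<le> s\<close> by (intro powr_mono2') auto
  moreover have "cauchy_kernel a x = ((1 + (norm x)\<^sup>2) ^ DIM('a)) powr (-s)"
  proof -
    have "- (real DIM('a) + a) / 2 = real DIM('a) * (-s)"
      by (simp add: s_def field_simps)
    then show ?thesis
      by (simp add: cauchy_kernel_def powr_realpow[symmetric] powr_powr add_pos_nonneg)
  qed
  ultimately show ?thesis
    by (simp add: prod_powr_distrib)
qed

lemma cauchy_kernel_integrable:
  assumes "0 < a"
  shows "integrable lborel (cauchy_kernel a :: 'a::euclidean_space \<Rightarrow> real)"
proof (rule integrableI_nonneg)
  define s where "s = (real DIM('a) + a) / (2 * real DIM('a))"
  have "1/2 < s"
    using assms by (simp add: s_def field_simps)
  have bound: "cauchy_kernel a x \<le> (\<Prod>b\<in>Basis. (1 + (x \<bullet> b)\<^sup>2) powr (-s))" for x :: 'a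
    using cauchy_kernel_le_prod[of a x] assms by (simp add: s_def)
  have "(\<integral>\<^sup>+x. cauchy_kernel a (x::'a) \<partial>lborel) \<le> (\<integral>\<^sup>+x. (\<Prod>b\<in>Basis. ennreal ((1 + ((x::'a) \<bullet> b)\<^sup>2) powr (-s))) \<partial>lborel)"
    by (intro nn_integral_mono) (use bound in \<open>simp add: prod_ennreal ennreal_leI\<close>)
  also have "\<dots> = (\<Prod>b\<in>(Basis::'a set). \<integral>\<^sup>+t. (1 + t\<^sup>2) powr (-s) \<partial>lborel)"
    by (rule nn_integral_lborel_prod) auto
  also have "\<dots> < \<infinity>"
    using nn_integral_one_plus_square_powr_finite[OF \<open>1/2 < s\<close>] by (simp add: power_less_top_ennreal)
  finally show "(\<integral>\<^sup>+x. cauchy_kernel a (x::'a) \<partial>lborel) < \<infinity>" .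
qed (auto intro: less_imp_le cauchy_kernel_pos)

lemma cauchy_const_pos:
  assumes "0 < a"
  shows "0 < cauchy_const a TYPE('a::euclidean_space)"
  unfolding cauchy_const_def
  by (rule integral_pos) (auto intro: cauchy_kernel_integrable assms cauchy_kernel_pos)

lemma peetre_inequality:
  fixes x y :: "'a::real_normed_vector"
  shows "1 + (norm x)\<^sup>2 \<le> 2 * (1 + (norm (x - y))\<^sup>2) * (1 + (norm y)\<^sup>2)"
proof -
  have "norm x \<le> norm (x - y) + norm y"
    using norm_triangle_ineq[of "x - y" y] by simp
  then have "(norm x)\<^sup>2 \<le> (norm (x - y) + norm y)\<^sup>2"
    by (intro power_mono) auto
  also have "\<dots> \<le> 2 * (norm (x - y))\<^sup>2 + 2 * (norm y)\<^sup>2"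
    using sum_squares_bound[of "norm (x - y)" "norm y"] by (simp add: power2_sum)
  finally have "(norm x)\<^sup>2 \<le> 2 * (norm (x - y))\<^sup>2 + 2 * (norm y)\<^sup>2" .
  moreover have "0 \<le> (norm (x - y))\<^sup>2 * (norm y)\<^sup>2"
    by simp
  moreover have "2 * (1 + (norm (x - y))\<^sup>2) * (1 + (norm y)\<^sup>2)
      = 2 + 2 * (norm (x - y))\<^sup>2 + 2 * (norm y)\<^sup>2 + 2 * ((norm (x - y))\<^sup>2 * (norm y)\<^sup>2)"
    by (simp add: algebra_simps)
  ultimately show ?thesis
    by linarith
qed

lemma cauchy_kernel_diff_ge:
  fixes x y :: "'a::euclidean_space"
  assumes "0 \<le> a"
  shows "2 powr (- (real DIM('a) + a) / 2) * cauchy_kernel a x * cauchy_kernel a y \<le> cauchy_kernel a (x - y)"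
proof -
  define e where "e = - (real DIM('a) + a) / 2"
  have "e \<le> 0"
    using assms by (simp add: e_def)
  have "1 + (norm (x - y))\<^sup>2 \<le> 2 * (1 + (norm x)\<^sup>2) * (1 + (norm y)\<^sup>2)"
    using peetre_inequality[of "x - y" "- y"] by simp
  then have "(2 * (1 + (norm x)\<^sup>2) * (1 + (norm y)\<^sup>2)) powr e \<le> (1 + (norm (x - y))\<^sup>2) powr e"
    using \<open>e \<le> 0\<close> by (intro powr_mono2') (auto simp: add_pos_nonneg)
  then show ?thesis
    unfolding cauchy_kernel_def e_def[symmetric] by (simp only: powr_mult)
qed

lemma cauchy_kernel_le_scaled:
  fixes x y :: "'a::euclidean_space"
  assumes "0 \<le> a" and "norm y \<le> 2 * norm x"
  shows "cauchy_kernel a x \<le> 4 powr ((real DIM('a) + a) / 2) * cauchy_kernel a y"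
proof -
  define e where "e = - (real DIM('a) + a) / 2"
  have "e \<le> 0"
    using assms by (simp add: e_def)
  have neg_e: "(real DIM('a) + a) / 2 = - e"
    by (simp add: e_def field_simps)
  have "(norm y)\<^sup>2 \<le> (2 * norm x)\<^sup>2"
    using assms(2) by (intro power_mono) auto
  then have "(1 + (norm y)\<^sup>2) / 4 \<le> 1 + (norm x)\<^sup>2"
    by (simp add: power_mult_distrib)
  then have "(1 + (norm x)\<^sup>2) powr e \<le> ((1 + (norm y)\<^sup>2) / 4) powr e"
    using \<open>e \<le> 0\<close> by (intro powr_mono2') (auto simp: add_pos_nonneg)
  also have "\<dots> = (1 + (norm y)\<^sup>2) powr e / 4 powr e"
    by (rule powr_divide)
  also have "\<dots> = 4 powr (- e) * (1 + (norm y)\<^sup>2) powr e"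
    by (simp add: powr_minus divide_inverse)
  finally show ?thesis
    unfolding cauchy_kernel_def e_def[symmetric] neg_e .
qed

section \<open>Convolutions of Cauchy kernels and densities\<close>

lemma integrable_cauchy_kernel_mult:
  fixes h :: "'a::euclidean_space \<Rightarrow> 'a"
  assumes "0 \<le> a" "0 < b" and [measurable]: "h \<in> borel_measurable borel"
  shows "integrable lborel (\<lambda>y. cauchy_kernel a (h y) * cauchy_kernel b y)"
proof (rule Bochner_Integration.integrable_bound[OF cauchy_kernel_integrable[OF \<open>0 < b\<close>]])
  have "cauchy_kernel a (h y) * cauchy_kernel b y \<le> cauchy_kernel b y" for y
    using cauchy_kernel_le_1[OF \<open>0 \<le> a\<close>, of "h y"] cauchy_kernel_pos[of b y]
    by (simp add: mult_left_le_one_le less_imp_le)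
  then show "AE y in lborel. norm (cauchy_kernel a (h y) * cauchy_kernel b y) \<le> norm (cauchy_kernel b y)"
    by (intro AE_I2) (simp add: abs_mult abs_of_pos cauchy_kernel_pos)
qed measurable

lemma cauchy_kernel_convolution_ge:
  fixes x :: "'a::euclidean_space"
  assumes "0 < a" "0 < b"
  shows "2 powr (- (real DIM('a) + a) / 2) * cauchy_kernel a x * (\<integral>y. cauchy_kernel a y * cauchy_kernel b (y::'a) \<partial>lborel)
    \<le> convolution (cauchy_kernel a) (cauchy_kernel b) x"
proof -
  define c where "c = 2 powr (- (real DIM('a) + a) / 2)"
  have "c * cauchy_kernel a x * (cauchy_kernel a y * cauchy_kernel b y) \<le> cauchy_kernel a (x - y) * cauchy_kernel b y"
    for y :: 'a
    using cauchy_kernel_diff_ge[of a x y] assms cauchy_kernel_pos[of b y]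
    by (simp add: c_def mult.assoc[symmetric] mult_right_mono)
  moreover have "integrable lborel (\<lambda>y. cauchy_kernel a y * cauchy_kernel b (y::'a))"
    using integrable_cauchy_kernel_mult[of a b "\<lambda>y. y"] assms by simp
  moreover have "integrable lborel (\<lambda>y. cauchy_kernel a (x - y) * cauchy_kernel b y)"
    using integrable_cauchy_kernel_mult[of a b "\<lambda>y. x - y"] assms by simp
  ultimately have "(\<integral>y. c * cauchy_kernel a x * (cauchy_kernel a y * cauchy_kernel b (y::'a)) \<partial>lborel)
      \<le> convolution (cauchy_kernel a) (cauchy_kernel b) x"
    unfolding convolution_def by (intro integral_mono) auto
  then show ?thesis
    by (simp add: c_def)
qed

lemma cauchy_kernel_diff_mult_le:
  fixes x y :: "'a::euclidean_space"
  assumes "0 \<le> a" "0 \<le> b"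
  defines "A \<equiv> 4 powr ((real DIM('a) + a) / 2)" and "B \<equiv> 4 powr ((real DIM('a) + b) / 2)"
  shows "cauchy_kernel a (x - y) * cauchy_kernel b y
    \<le> A * cauchy_kernel a x * cauchy_kernel b y + B * cauchy_kernel b x * cauchy_kernel a (x - y)"
proof -
  note k_nonneg = cauchy_kernel_pos[THEN less_imp_le]
  have "0 \<le> A * cauchy_kernel a x * cauchy_kernel b y" "0 \<le> B * cauchy_kernel b x * cauchy_kernel a (x - y)"
    by (simp_all add: A_def B_def k_nonneg)
  moreover have "norm x \<le> 2 * norm (x - y) \<or> norm x \<le> 2 * norm y"
    using norm_triangle_ineq[of "x - y" y] by auto
  moreover have "cauchy_kernel a (x - y) * cauchy_kernel b y \<le> A * cauchy_kernel a x * cauchy_kernel b y"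
    if "norm x \<le> 2 * norm (x - y)"
    using cauchy_kernel_le_scaled[OF \<open>0 \<le> a\<close> that] unfolding A_def by (intro mult_right_mono k_nonneg)
  moreover have "cauchy_kernel a (x - y) * cauchy_kernel b y \<le> B * cauchy_kernel b x * cauchy_kernel a (x - y)"
    if "norm x \<le> 2 * norm y"
    using cauchy_kernel_le_scaled[OF \<open>0 \<le> b\<close> that] unfolding B_def
    by (subst mult.commute) (intro mult_right_mono k_nonneg)
  ultimately show ?thesis
    by linarith
qed

lemma cauchy_kernel_convolution_le:
  fixes x :: "'a::euclidean_space"
  assumes "0 < a" "0 < b"
  defines "A \<equiv> 4 powr ((real DIM('a) + a) / 2)" and "B \<equiv> 4 powr ((real DIM('a) + b) / 2)"
  shows "convolution (cauchy_kernel a) (cauchy_kernel b) x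
    \<le> (A * cauchy_const b TYPE('a) + B * cauchy_const a TYPE('a)) * cauchy_kernel (min a b) x"
proof -
  have int: "integrable lborel (\<lambda>y. cauchy_kernel a (x - y))" "integrable lborel (cauchy_kernel b :: 'a \<Rightarrow> real)"
    using assms by (simp_all add: integrable_lborel_reflect cauchy_kernel_integrable)
  have "convolution (cauchy_kernel a) (cauchy_kernel b) x
      \<le> (\<integral>y. A * cauchy_kernel a x * cauchy_kernel b y + B * cauchy_kernel b x * cauchy_kernel a (x - y) \<partial>lborel)"
    unfolding convolution_def A_def B_def using assms int cauchy_kernel_diff_mult_le[of a b x]
    by (intro integral_mono integrable_cauchy_kernel_mult) auto
  also have "\<dots> = A * cauchy_kernel a x * cauchy_const b TYPE('a) + B * cauchy_kernel b x * cauchy_const a TYPE('a)"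
    using int by (simp add: cauchy_const_def integral_lborel_reflect)
  also have "\<dots> \<le> A * cauchy_kernel (min a b) x * cauchy_const b TYPE('a) + B * cauchy_kernel (min a b) x * cauchy_const a TYPE('a)"
    using cauchy_const_pos[OF \<open>0 < a\<close>, where 'a='a] cauchy_const_pos[OF \<open>0 < b\<close>, where 'a='a]
    by (intro add_mono mult_right_mono mult_left_mono cauchy_kernel_antimono) (auto simp: A_def B_def)
  finally show ?thesis
    by (simp add: algebra_simps)
qed

lemma cauchy_kernel_convolution_comparable:
  assumes "0 < a1" "0 < a2"
  shows "\<exists>c C. 0 < c \<and> (\<forall>x::'a::euclidean_space.
    c * cauchy_kernel (min a1 a2) x \<le> convolution (cauchy_kernel a1) (cauchy_kernel a2) x \<and>
    convolution (cauchy_kernel a1) (cauchy_kernel a2) x \<le> C * cauchy_kernel (min a1 a2) x)"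
proof -
  have lower: "\<exists>c>0. \<forall>x::'a. c * cauchy_kernel a x \<le> convolution (cauchy_kernel a) (cauchy_kernel b) x"
    if "0 < a" "0 < b" for a b
  proof -
    define W where "W = (\<integral>y. cauchy_kernel a y * cauchy_kernel b (y::'a) \<partial>lborel)"
    have "0 < W"
      unfolding W_def using that integrable_cauchy_kernel_mult[of a b "\<lambda>y. y"] cauchy_kernel_pos
      by (intro integral_pos) (auto intro: mult_pos_pos)
    moreover have "\<forall>x::'a. 2 powr (- (real DIM('a) + a) / 2) * W * cauchy_kernel a x
        \<le> convolution (cauchy_kernel a) (cauchy_kernel b) x"
      using cauchy_kernel_convolution_ge[OF that, where 'a='a] by (simp add: W_def mult_ac)
    ultimately show ?thesis
      by (intro exI[of _ "2 powr (- (real DIM('a) + a) / 2) * W"]) simp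
  qed
  obtain c where "0 < c"
    and "\<forall>x::'a. c * cauchy_kernel (min a1 a2) x \<le> convolution (cauchy_kernel a1) (cauchy_kernel a2) x"
  proof (cases "a1 \<le> a2")
    case True
    then show ?thesis
      using lower[OF assms] that by (auto simp: min_absorb1)
  next
    case False
    then show ?thesis
      using lower[OF assms(2,1)] that by (auto simp: min_absorb2 convolution_commute)
  qed
  then show ?thesis
    using cauchy_kernel_convolution_le[OF assms] by blast
qed

lemma borel_measurable_cauchy_density [measurable]: "cauchy_density a \<in> borel_measurable borel"
  unfolding cauchy_density_def[abs_def] by measurable

lemma cauchy_density_pos:
  assumes "0 < a"
  shows "0 < cauchy_density a (x::'a::euclidean_space)"
  unfolding cauchy_density_def by (rule divide_pos_pos[OF cauchy_kernel_pos cauchy_const_pos[OF assms]])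

lemma nn_integral_cauchy_density:
  assumes "0 < a"
  shows "(\<integral>\<^sup>+x. cauchy_density a (x::'a::euclidean_space) \<partial>lborel) = 1"
proof -
  have "integrable lborel (cauchy_density a :: 'a \<Rightarrow> real)"
    using cauchy_kernel_integrable[OF assms, where 'a='a] by (simp add: cauchy_density_def[abs_def])
  then have "(\<integral>\<^sup>+x. cauchy_density a (x::'a) \<partial>lborel) = (\<integral>x. cauchy_density a (x::'a) \<partial>lborel)"
    using cauchy_density_pos[OF assms] by (intro nn_integral_eq_integral AE_I2 less_imp_le)
  also have "\<dots> = 1"
    using cauchy_const_pos[OF assms, where 'a='a] by (simp add: cauchy_density_def cauchy_const_def)
  finally show ?thesis
    by simp
qed

lemma convolution_cauchy_density:
  fixes x :: "'a::euclidean_space"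
  shows "convolution (cauchy_density a) (cauchy_density b) x
    = convolution (cauchy_kernel a) (cauchy_kernel b) x / (cauchy_const a TYPE('a) * cauchy_const b TYPE('a))"
  by (simp add: convolution_def cauchy_density_def)

lemma nn_integral_cauchy_density_convolution:
  assumes "0 < a" "0 < b"
  shows "(\<integral>\<^sup>+x. convolution (cauchy_density a) (cauchy_density b) (x::'a::euclidean_space) \<partial>lborel) = 1"
proof -
  have "integrable lborel (\<lambda>y. cauchy_density a (x - y) * cauchy_density b (y::'a))" for x
    using integrable_cauchy_kernel_mult[of a b "\<lambda>y. x - y"] assms
    by (simp add: cauchy_density_def)
  then have "(\<integral>\<^sup>+x. convolution (cauchy_density a) (cauchy_density b) (x::'a) \<partial>lborel)
      = (\<integral>\<^sup>+x. cauchy_density a (x::'a) \<partial>lborel) * (\<integral>\<^sup>+x. cauchy_density b (x::'a) \<partial>lborel)"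
    using assms by (intro nn_integral_convolution) (auto intro: less_imp_le cauchy_density_pos)
  then show ?thesis
    using assms by (simp add: nn_integral_cauchy_density)
qed

lemma cauchy_density_convolution_comparable:
  assumes "0 < a1" "0 < a2"
  shows "\<exists>c C. 0 < c \<and> c \<le> C \<and> (\<forall>x::'a::euclidean_space.
    c * cauchy_density (min a1 a2) x \<le> convolution (cauchy_density a1) (cauchy_density a2) x \<and>
    convolution (cauchy_density a1) (cauchy_density a2) x \<le> C * cauchy_density (min a1 a2) x)"
proof -
  obtain c C where "0 < c" and kernel_bounds: "\<forall>x::'a.
    c * cauchy_kernel (min a1 a2) x \<le> convolution (cauchy_kernel a1) (cauchy_kernel a2) x \<and>
    convolution (cauchy_kernel a1) (cauchy_kernel a2) x \<le> C * cauchy_kernel (min a1 a2) x"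
    using cauchy_kernel_convolution_comparable[OF assms] by blast
  define Z where "Z = cauchy_const a1 TYPE('a) * cauchy_const a2 TYPE('a)"
  define r where "r = cauchy_const (min a1 a2) TYPE('a) / Z"
  have "0 < Z" "0 < r"
    using assms by (simp_all add: Z_def r_def cauchy_const_pos)
  have scale: "s * r * cauchy_density (min a1 a2) x = s * cauchy_kernel (min a1 a2) x / Z" for s and x :: 'a
    using cauchy_const_pos[of "min a1 a2", where 'a='a] assms by (simp add: r_def cauchy_density_def)
  have bounds: "c * r * cauchy_density (min a1 a2) x \<le> convolution (cauchy_density a1) (cauchy_density a2) x \<and>
    convolution (cauchy_density a1) (cauchy_density a2) x \<le> C * r * cauchy_density (min a1 a2) x" for x :: 'a
    using kernel_bounds \<open>0 < Z\<close> unfolding scale convolution_cauchy_density Z_def[symmetric]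
    by (auto intro: divide_right_mono)
  have "c * r * cauchy_density (min a1 a2) (0::'a) \<le> C * r * cauchy_density (min a1 a2) (0::'a)"
    using bounds[of 0] by (meson order_trans)
  moreover have "0 < cauchy_density (min a1 a2) (0::'a)"
    using assms by (simp add: cauchy_density_pos)
  ultimately have "c * r \<le> C * r"
    by (rule mult_right_le_imp_le)
  moreover have "0 < c * r"
    using \<open>0 < c\<close> \<open>0 < r\<close> by simp
  ultimately show ?thesis
    using bounds by (intro exI[of _ "c * r"] exI[of _ "C * r"] conjI allI) auto
qed

theorem mainTheorem12:
  fixes \<alpha>1 \<alpha>2 :: real
  assumes "0 < \<alpha>1" and "0 < \<alpha>2"
  shows "\<exists>c C. 0 < c \<and> c \<le> C \<and>
    (\<forall>x::'a::euclidean_space.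
        c * cauchy_density (min \<alpha>1 \<alpha>2) x \<le> convolution (cauchy_density \<alpha>1) (cauchy_density \<alpha>2) x
      \<and> convolution (cauchy_density \<alpha>1) (cauchy_density \<alpha>2) x \<le> C * cauchy_density (min \<alpha>1 \<alpha>2) x) \<and>
    (\<forall>(w::'a \<Rightarrow> real) K. weighted_poincare (cauchy_density (min \<alpha>1 \<alpha>2)) w K \<longrightarrow>
        weighted_poincare (convolution (cauchy_density \<alpha>1) (cauchy_density \<alpha>2)) w ((C / c) * K))"
proof -
  obtain c C where "0 < c" "c \<le> C" and bounds: "\<forall>x::'a.
    c * cauchy_density (min \<alpha>1 \<alpha>2) x \<le> convolution (cauchy_density \<alpha>1) (cauchy_density \<alpha>2) x \<and>
    convolution (cauchy_density \<alpha>1) (cauchy_density \<alpha>2) x \<le> C * cauchy_density (min \<alpha>1 \<alpha>2) x"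
    using cauchy_density_convolution_comparable[OF assms] by blast
  have "weighted_poincare (convolution (cauchy_density \<alpha>1) (cauchy_density \<alpha>2)) w (C / c * K)"
    if "weighted_poincare (cauchy_density (min \<alpha>1 \<alpha>2)) w K" for w :: "'a \<Rightarrow> real" and K
    using \<open>0 < c\<close> \<open>c \<le> C\<close> bounds nn_integral_cauchy_density_convolution[OF assms] that
    by (intro weighted_poincare_density_comparison) auto
  with \<open>0 < c\<close> \<open>c \<le> C\<close> bounds show ?thesis
    by blast
qed

end
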